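(* Let $R$ be an integral domain and let $A$ be an evolution algebra over $R$ with finite basis $x_1,\dots,x_N$ and structure coefficient matrix $C=(c_{ki})_{N\times N}$. Then $A$ is nilpotent if and only if there is a reordering (permutation) of the basis elements $x_1,\dots,x_N$ such that, with respect to this ordering, $C$ is strictly upper triangular (i.e. $c_{ki}=0$ whenever $k\ge i$ in the new ordering).
   Context: An evolution algebra over a commutative ring $R$ is a free $R$-module $A$ with basis $\{x_i\}$ equipped with the $R$-bilinear multiplication determined by $x_ix_j=0$ for $i\ne j$ and $x_i^2=\sum_k c_{ki}x_k$ with $c_{ki}\in R$. The structure coefficient matrix $C$ has $(k,i)$ entry $c_{ki}$, so its $i$-th column consists of the coordinates of $x_i^2$. Powers: $A^1=A$, $A^n=A^{n-1}A$; $A$ is nilpotent if $A^n=(0)$ for some $n$. *)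

theory Defs
  imports Main
begin

text \<open>An evolution algebra of rank N over a commutative ring 'a is modelled on the
free module of coordinate vectors v :: nat \<Rightarrow> 'a supported on {..<N}
(v k is the coefficient of basis element x_k). The structure matrix is
C :: nat \<Rightarrow> nat \<Rightarrow> 'a with C k i = c_ki, i.e. x_i^2 = sum_k c_ki x_k.\<close>

definition evo_space :: "nat \<Rightarrow> (nat \<Rightarrow> 'a::comm_ring_1) set" where
  "evo_space N = {v. \<forall>k\<ge>N. v k = 0}"

definition evo_mult :: "nat \<Rightarrow> (nat \<Rightarrow> nat \<Rightarrow> 'a::comm_ring_1)
    \<Rightarrow> (nat \<Rightarrow> 'a) \<Rightarrow> (nat \<Rightarrow> 'a) \<Rightarrow> (nat \<Rightarrow> 'a)" where
  "evo_mult N C u v = (\<lambda>k. if k < N then (\<Sum>i<N. u i * v i * C k i) else 0)"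

inductive_set lin_span :: "(nat \<Rightarrow> 'a::comm_ring_1) set \<Rightarrow> (nat \<Rightarrow> 'a) set"
  for S :: "(nat \<Rightarrow> 'a) set" where
  zero: "(\<lambda>_. 0) \<in> lin_span S"
| gen: "v \<in> S \<Longrightarrow> v \<in> lin_span S"
| add: "u \<in> lin_span S \<Longrightarrow> v \<in> lin_span S \<Longrightarrow> (\<lambda>k. u k + v k) \<in> lin_span S"
| smult: "v \<in> lin_span S \<Longrightarrow> (\<lambda>k. r * v k) \<in> lin_span S"

text \<open>Powers: A^1 = A, A^(n+1) = A^n A (submodule spanned by products).
  The index 0 is given the value A as a harmless convention.\<close>
fun evo_power :: "nat \<Rightarrow> (nat \<Rightarrow> nat \<Rightarrow> 'a::comm_ring_1) \<Rightarrow> nat \<Rightarrow> (nat \<Rightarrow> 'a) set" where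
  "evo_power N C 0 = evo_space N"
| "evo_power N C (Suc 0) = evo_space N"
| "evo_power N C (Suc (Suc n)) =
     lin_span {evo_mult N C u v | u v. u \<in> evo_power N C (Suc n) \<and> v \<in> evo_space N}"

definition evo_nilpotent :: "nat \<Rightarrow> (nat \<Rightarrow> nat \<Rightarrow> 'a::comm_ring_1) \<Rightarrow> bool" where
  "evo_nilpotent N C \<longleftrightarrow> (\<exists>n\<ge>1. evo_power N C n = {\<lambda>_. 0})"

end

theory Submission
  imports Defs
begin

(* Read C as a digraph on the basis indices {..<N} with an arc i -> j
   whenever c_ji \<noteq> 0, i.e. whenever x_j occurs in x_i^2.  Both sides of the theorem
   are equivalent to this digraph being acyclic, expressed here as: every nonempty
   set T of indices contains an index i whose square has no component in T.

   Nilpotent \<Longrightarrow> acyclic: if some T has no such index, every i in T has a successor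
   j in T, and multiplying by a unit vector moves a nonzero coordinate at i to the
   nonzero coordinate u_i c_ji at j (R has no zero divisors), so no power vanishes.
   Acyclic \<Longrightarrow> triangular: repeatedly remove a source, i.e. topologically sort.
   Triangular \<Longrightarrow> nilpotent: by induction, A^(m+1) vanishes on the last m indices
   of the ordering, hence A^(N+1) = 0. *)

text \<open>For a finite index set this is acyclicity of the digraph
  with arcs i -> j for c_ji nonzero.\<close>
definition evo_acyclic :: "nat \<Rightarrow> (nat \<Rightarrow> nat \<Rightarrow> 'a::zero) \<Rightarrow> bool" where
  "evo_acyclic N C \<longleftrightarrow> (\<forall>T \<subseteq> {..<N}. T \<noteq> {} \<longrightarrow> (\<exists>i\<in>T. \<forall>j\<in>T. C j i = 0))"

lemma topological_enumeration:
  fixes E :: "'b \<Rightarrow> 'b \<Rightarrow> bool"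
  assumes "finite R"
    and "\<And>T. T \<subseteq> R \<Longrightarrow> T \<noteq> {} \<Longrightarrow> \<exists>i\<in>T. \<forall>j\<in>T. \<not> E j i"
  shows "\<exists>xs. distinct xs \<and> set xs = R \<and> (\<forall>k<length xs. \<forall>i\<le>k. \<not> E (xs ! k) (xs ! i))"
  using assms
proof (induction R rule: finite_psubset_induct)
  case (psubset R)
  show ?case
  proof (cases "R = {}")
    case True
    then show ?thesis by (intro exI[of _ "[]"]) auto
  next
    case False
    then obtain i0 where i0: "i0 \<in> R" "\<forall>j\<in>R. \<not> E j i0"
      using psubset.prems[of R] by blast
    have sub: "R - {i0} \<subset> R" using i0(1) by blast
    have "\<exists>i\<in>T. \<forall>j\<in>T. \<not> E j i" if "T \<subseteq> R - {i0}" "T \<noteq> {}" for T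
      using psubset.prems that by blast
    then obtain xs where xs: "distinct xs" "set xs = R - {i0}"
      "\<forall>k<length xs. \<forall>i\<le>k. \<not> E (xs ! k) (xs ! i)"
      using psubset.IH[OF sub] by blast
    have set: "set (i0 # xs) = R" using xs(2) i0(1) by auto
    have "\<not> E ((i0 # xs) ! k) ((i0 # xs) ! i)" if k: "k < length (i0 # xs)" and ik: "i \<le> k" for k i
    proof (cases i)
      case 0
      have "(i0 # xs) ! k \<in> R" using k set nth_mem by metis
      then show ?thesis using 0 i0(2) by simp
    next
      case (Suc i')
      then obtain k' where "k = Suc k'" using ik by (cases k) auto
      then show ?thesis using Suc xs(3) k ik by auto
    qed
    then show ?thesis using xs(1,2) set by (intro exI[of _ "i0 # xs"]) auto
  qed
qed

lemma acyclic_imp_triangularisable: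
  fixes C :: "nat \<Rightarrow> nat \<Rightarrow> 'a::zero"
  assumes "evo_acyclic N C"
  shows "\<exists>\<sigma>. bij_betw \<sigma> {..<N} {..<N} \<and> (\<forall>k<N. \<forall>i<N. i \<le> k \<longrightarrow> C (\<sigma> k) (\<sigma> i) = 0)"
proof -
  obtain xs where xs: "distinct xs" "set xs = {..<N}"
    "\<forall>k<length xs. \<forall>i\<le>k. \<not> C (xs ! k) (xs ! i) \<noteq> 0"
    using topological_enumeration[of "{..<N}" "\<lambda>j i. C j i \<noteq> 0"] assms
    unfolding evo_acyclic_def by auto
  have len: "length xs = N" using distinct_card[OF xs(1)] xs(2) by simp
  show ?thesis
    using xs len by (intro exI[of _ "(!) xs"] conjI bij_betw_nth) auto
qed

lemma lin_span_vanishing: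
  assumes "\<forall>v\<in>S. \<forall>k\<in>K. v k = 0" and "u \<in> lin_span S"
  shows "\<forall>k\<in>K. u k = 0"
  using assms(2) by (induction u rule: lin_span.induct) (auto simp: assms(1))

lemma zero_in_evo_power: "(\<lambda>_. 0) \<in> evo_power N C n"
  by (induction N C n rule: evo_power.induct) (auto simp: evo_space_def intro: lin_span.zero)

lemma evo_power_subset_space: "u \<in> evo_power N C n \<Longrightarrow> u \<in> evo_space N"
proof (induction N C n rule: evo_power.induct)
  case (3 N C n)
  have products_vanish: "\<forall>v\<in>{evo_mult N C u v | u v. u \<in> evo_power N C (Suc n) \<and>
      v \<in> evo_space N}. \<forall>k\<in>{N..}. v k = 0"
    by (auto simp: evo_mult_def)
  from lin_span_vanishing[OF products_vanish "3.prems"[unfolded evo_power.simps]]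
  show ?case by (simp add: evo_space_def)
qed auto

definition unit_vec :: "nat \<Rightarrow> nat \<Rightarrow> 'a::comm_ring_1" where
  "unit_vec i = (\<lambda>k. if k = i then 1 else 0)"

lemma unit_vec_in_space: "i < N \<Longrightarrow> unit_vec i \<in> evo_space N"
  by (simp add: unit_vec_def evo_space_def)

lemma evo_mult_unit_vec:
  assumes "i < N" "j < N"
  shows "evo_mult N C u (unit_vec i) j = u i * C j i"
proof -
  have "evo_mult N C u (unit_vec i) j = (\<Sum>l<N. u l * unit_vec i l * C j l)"
    using assms(2) by (simp add: evo_mult_def)
  also have "\<dots> = (\<Sum>l<N. if l = i then u i * C j i else 0)"
    by (rule sum.cong) (auto simp: unit_vec_def)
  also have "\<dots> = u i * C j i" using assms(1) by simp
  finally show ?thesis .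
qed

lemma cycle_survives_powers:
  fixes C :: "nat \<Rightarrow> nat \<Rightarrow> 'a::idom"
  assumes T: "T \<subseteq> {..<N}" "T \<noteq> {}" and succ: "\<forall>i\<in>T. \<exists>j\<in>T. C j i \<noteq> 0"
  shows "\<exists>u\<in>evo_power N C (Suc m). \<exists>i\<in>T. u i \<noteq> 0"
proof (induction m)
  case 0
  from T obtain i where "i \<in> T" "i < N" by blast
  then show ?case
    using unit_vec_in_space[of i N] by (intro bexI[of _ "unit_vec i"]) (auto simp: unit_vec_def)
next
  case (Suc m)
  then obtain u i where u: "u \<in> evo_power N C (Suc m)" "i \<in> T" "u i \<noteq> 0" by blast
  obtain j where j: "j \<in> T" "C j i \<noteq> 0" using succ u(2) by blast
  have ij: "i < N" "j < N" using T u(2) j(1) by auto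
  have "evo_mult N C u (unit_vec i) \<in> evo_power N C (Suc (Suc m))"
    using u(1) unit_vec_in_space[OF ij(1)] by (auto intro!: lin_span.gen)
  moreover have "evo_mult N C u (unit_vec i) j \<noteq> 0"
    using evo_mult_unit_vec[OF ij, of C u] u(3) j(2) by simp
  ultimately show ?case using j(1) by blast
qed

lemma nilpotent_imp_acyclic:
  fixes C :: "nat \<Rightarrow> nat \<Rightarrow> 'a::idom"
  assumes "evo_nilpotent N C"
  shows "evo_acyclic N C"
  unfolding evo_acyclic_def
proof (intro allI impI, rule ccontr)
  fix T assume T: "T \<subseteq> {..<N}" "T \<noteq> {}" and "\<not> (\<exists>i\<in>T. \<forall>j\<in>T. C j i = 0)"
  then have "\<forall>i\<in>T. \<exists>j\<in>T. C j i \<noteq> 0" by blast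
  obtain n where "n \<ge> 1" "evo_power N C n = {\<lambda>_. 0}"
    using assms unfolding evo_nilpotent_def by blast
  then obtain m where "evo_power N C (Suc m) = {\<lambda>_. 0}" by (cases n) auto
  with cycle_survives_powers[OF T \<open>\<forall>i\<in>T. \<exists>j\<in>T. C j i \<noteq> 0\<close>, of m] show False by auto
qed

text \<open>For a strictly upper triangular ordering \<sigma>, the power A^(m+1) vanishes on the
  coordinates \<sigma> p with p \<ge> N - m: a product a x_i with i = \<sigma> q only reaches \<sigma> p
  through c_(\<sigma> p)(\<sigma> q), which is zero unless q > p, and then a (\<sigma> q) = 0 already.\<close>
lemma triangular_power_vanishes:
  fixes C :: "nat \<Rightarrow> nat \<Rightarrow> 'a::comm_ring_1"
  assumes bij: "bij_betw \<sigma> {..<N} {..<N}"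
    and tri: "\<forall>k<N. \<forall>i<N. i \<le> k \<longrightarrow> C (\<sigma> k) (\<sigma> i) = 0"
  shows "u \<in> evo_power N C (Suc m) \<Longrightarrow> p < N \<Longrightarrow> N \<le> p + m \<Longrightarrow> u (\<sigma> p) = 0"
proof (induction m arbitrary: u p)
  case (Suc m)
  let ?K = "\<sigma> ` {p. p < N \<and> N \<le> p + Suc m}"
  have "v k = 0" if v: "v = evo_mult N C a b" "a \<in> evo_power N C (Suc m)" and k: "k \<in> ?K"
    for v a b k
  proof -
    obtain p where p: "k = \<sigma> p" "p < N" "N \<le> p + Suc m" using k by blast
    have "a i * b i * C (\<sigma> p) i = 0" if "i < N" for i
    proof -
      obtain q where q: "q < N" "i = \<sigma> q" using bij \<open>i < N\<close> by (auto simp: bij_betw_def)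
      show ?thesis
      proof (cases "q \<le> p")
        case True then show ?thesis using tri q p by auto
      next
        case False then show ?thesis using Suc.IH[OF v(2) q(1)] q p by auto
      qed
    qed
    then show ?thesis using v(1) p(1) by (simp add: evo_mult_def)
  qed
  then have products_vanish: "\<forall>v\<in>{evo_mult N C a b | a b. a \<in> evo_power N C (Suc m) \<and>
      b \<in> evo_space N}. \<forall>k\<in>?K. v k = 0"
    by blast
  have "\<sigma> p \<in> ?K" using Suc.prems(2,3) by blast
  with lin_span_vanishing[OF products_vanish Suc.prems(1)[unfolded evo_power.simps]]
  show ?case by blast
qed simp

lemma triangular_imp_nilpotent:
  fixes C :: "nat \<Rightarrow> nat \<Rightarrow> 'a::comm_ring_1"
  assumes bij: "bij_betw \<sigma> {..<N} {..<N}"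
    and tri: "\<forall>k<N. \<forall>i<N. i \<le> k \<longrightarrow> C (\<sigma> k) (\<sigma> i) = 0"
  shows "evo_nilpotent N C"
proof -
  have "u = (\<lambda>_. 0)" if u: "u \<in> evo_power N C (Suc N)" for u
  proof
    fix k
    show "u k = 0"
    proof (cases "k < N")
      case True
      then obtain p where "p < N" "k = \<sigma> p" using bij by (auto simp: bij_betw_def)
      then show ?thesis using triangular_power_vanishes[OF bij tri u] by simp
    next
      case False
      then show ?thesis using evo_power_subset_space[OF u] by (simp add: evo_space_def)
    qed
  qed
  then have "evo_power N C (Suc N) = {\<lambda>_. 0}" using zero_in_evo_power by blast
  then show ?thesis unfolding evo_nilpotent_def by (intro exI[of _ "Suc N"]) auto
qed

theorem theorem2p8:
  fixes C :: "nat \<Rightarrow> nat \<Rightarrow> 'a::idom" and N :: nat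
  shows "evo_nilpotent N C \<longleftrightarrow>
    (\<exists>\<sigma>. bij_betw \<sigma> {..<N} {..<N} \<and>
         (\<forall>k<N. \<forall>i<N. i \<le> k \<longrightarrow> C (\<sigma> k) (\<sigma> i) = 0))"
proof
  assume "evo_nilpotent N C"
  then show "\<exists>\<sigma>. bij_betw \<sigma> {..<N} {..<N} \<and> (\<forall>k<N. \<forall>i<N. i \<le> k \<longrightarrow> C (\<sigma> k) (\<sigma> i) = 0)"
    by (intro acyclic_imp_triangularisable nilpotent_imp_acyclic)
next
  assume "\<exists>\<sigma>. bij_betw \<sigma> {..<N} {..<N} \<and> (\<forall>k<N. \<forall>i<N. i \<le> k \<longrightarrow> C (\<sigma> k) (\<sigma> i) = 0)"
  then show "evo_nilpotent N C" using triangular_imp_nilpotent by blast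
qed

end
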